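(* Let $\beta>0$ and let the full-system state be decomposed as $\mathbf{s}=(\mathbf{s}_1,\dots,\mathbf{s}_K,\mathbf{s}_{\mathrm{env}})$, with total energy $$V_{\mathrm{tot}}(\mathbf{s})=\sum_{i=1}^K U_i(\mathbf{s}_i)+U_{\mathrm{env}}(\mathbf{s}_{\mathrm{env}})+U_{\mathrm{int}}(\mathbf{s}_1,\dots,\mathbf{s}_K,\mathbf{s}_{\mathrm{env}})$$ and true Boltzmann density $\pi(\mathbf{s})\propto\exp(-\beta V_{\mathrm{tot}}(\mathbf{s}))$. Assume that the priors are $p_i(\mathbf{x}_i)\propto\exp(-\beta U_i(\mathbf{x}_i))$ for $i=1,\dots,K$, that the projectors are $\Phi_i(\mathbf{s})=\mathbf{s}_i$, and that the context factor is $$\pi_{\mathrm{ctx}}(\mathbf{s})\propto\exp\!\Big(-\beta\big[U_{\mathrm{env}}(\mathbf{s}_{\mathrm{env}})+U_{\mathrm{int}}(\mathbf{s}_1,\dots,\mathbf{s}_K,\mathbf{s}_{\mathrm{env}})\big]\Big).$$ Then the $t\to0$ joint target $\pi_0$ (defined in the context), after marginalizing out $\mathbf{s}_1,\dots,\mathbf{s}_K$, satisfies $$\pi_0(\{\mathbf{x}_i\},\mathbf{s}_{\mathrm{env}})\propto\exp\!\big(-\beta V_{\mathrm{tot}}(\mathbf{x}_1,\dots,\mathbf{x}_K,\mathbf{s}_{\mathrm{env}})\big).$$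
   Context: Setting: there are $K$ prior variables $\mathbf{x}_i\in\mathcal{X}_i$, each with a prior density $p_i(\mathbf{x}_i)$ and a forward diffusion kernel $q_t^{(i)}(\mathbf{y}\mid\mathbf{x}_i)$ indexed by diffusion time $t\in[0,1]$, satisfying $\lim_{t\to0}q_t^{(i)}(\mathbf{y}\mid\mathbf{x}_i)=\delta(\mathbf{y}-\mathbf{x}_i)$ (Dirac delta). Projections $\Phi_i:\mathcal{S}\to\mathcal{X}_i$ map the full-system state $\mathbf{s}\in\mathcal{S}$ to the prior variables. A context schedule $q_{\mathrm{ctx}}(\mathbf{s},t)$ with $q_{\mathrm{ctx}}(\mathbf{s},0)=\pi_{\mathrm{ctx}}(\mathbf{s})$ is given. The joint target on $\mathcal{S}\times\prod_i\mathcal{X}_i$ is $$\pi_t(\mathbf{s},\{\mathbf{x}_i\})\propto q_{\mathrm{ctx}}(\mathbf{s},t)\prod_{i=1}^K p_i(\mathbf{x}_i)\,q_t^{(i)}(\Phi_i(\mathbf{s})\mid\mathbf{x}_i),$$ and its $t\to0$ limit is $$\pi_0(\mathbf{s},\{\mathbf{x}_i\})\propto\pi_{\mathrm{ctx}}(\mathbf{s})\prod_{i=1}^K p_i(\mathbf{x}_i)\,\delta(\Phi_i(\mathbf{s})-\mathbf{x}_i).$$ *)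

theory Defs
  imports "HOL-Analysis.Analysis"
begin

definition V_tot :: "'i set \<Rightarrow> ('i \<Rightarrow> 'a \<Rightarrow> real) \<Rightarrow> ('e \<Rightarrow> real)
    \<Rightarrow> (('i \<Rightarrow> 'a) \<Rightarrow> 'e \<Rightarrow> real) \<Rightarrow> ('i \<Rightarrow> 'a) \<Rightarrow> 'e \<Rightarrow> real" where
  "V_tot I U Uenv Uint f e = (\<Sum>i\<in>I. U i (f i)) + Uenv e + Uint f e"

text \<open>The t -> 0 joint target pi_0(s,{x_i}) proportional to
  pi_ctx(s) prod_i p_i(x_i) delta(Phi_i(s) - x_i), as an (unnormalised) measure on
  S x prod_i X_i: the Dirac factors force x_i = Phi_i(s), so pi_0 is the image of the
  measure with density pi_ctx(s) prod_i p_i(Phi_i s) on S under s |-> (s, (Phi_i s)_i).\<close>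
definition joint_target0 :: "'s measure \<Rightarrow> 'i set \<Rightarrow> ('i \<Rightarrow> 'a measure) \<Rightarrow> ('s \<Rightarrow> real)
    \<Rightarrow> ('i \<Rightarrow> 'a \<Rightarrow> real) \<Rightarrow> ('i \<Rightarrow> 's \<Rightarrow> 'a) \<Rightarrow> ('s \<times> ('i \<Rightarrow> 'a)) measure" where
  "joint_target0 S I X ctx p \<Phi> =
     distr (density S (\<lambda>s. ennreal (ctx s * (\<Prod>i\<in>I. p i (\<Phi> i s)))))
           (S \<Otimes>\<^sub>M PiM I X) (\<lambda>s. (s, \<lambda>i\<in>I. \<Phi> i s))"

end

theory Submission
  imports Defs
begin

text \<open>The Dirac factors of \<open>\<pi>\<^sub>0\<close> identify each prior variable \<open>x\<^sub>i\<close> with the coordinate \<open>s\<^sub>i\<close>,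
  so forgetting \<open>s\<^sub>1, \<dots>, s\<^sub>K\<close> and keeping \<open>(x, s\<^sub>e\<^sub>n\<^sub>v)\<close> just undoes the embedding
  \<open>s \<mapsto> (s, (s\<^sub>i)\<^sub>i)\<close>: the marginal is the density \<open>\<pi>\<^sub>c\<^sub>t\<^sub>x(s) \<Prod>\<^sub>i p\<^sub>i(s\<^sub>i)\<close> itself.
  With Boltzmann priors and context factor, this product of exponentials is
  \<open>exp (-\<beta> V\<^sub>t\<^sub>o\<^sub>t)\<close> up to the product of the normalising constants.\<close>

lemma density_cong_space:
  assumes "\<And>x. x \<in> space M \<Longrightarrow> f x = g x"
  shows "density M f = density M g"
  unfolding density_def
  by (rule arg_cong[where f="measure_of (space M) (sets M)"], rule ext, rule nn_integral_cong)
     (simp add: assms)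

lemma distr_distr_left_inverse:
  assumes "F \<in> N \<rightarrow>\<^sub>M T" and "G \<in> T \<rightarrow>\<^sub>M L" and "sets L = sets N"
    and "\<And>x. x \<in> space N \<Longrightarrow> G (F x) = x"
  shows "distr (distr N T F) L G = N"
proof -
  have "distr (distr N T F) L G = distr N L (G \<circ> F)"
    using assms(1,2) by (rule distr_distr[rotated])
  also have "\<dots> = distr N L (\<lambda>x. x)"
    using assms(4) by (intro distr_cong) auto
  also have "\<dots> = N"
    using assms(3) by (rule distr_id2)
  finally show ?thesis .
qed

lemma measurable_pair_restrict_fst:
  "(\<lambda>s. (s, \<lambda>i\<in>I. fst s i)) \<in> PiM I M \<Otimes>\<^sub>M E \<rightarrow>\<^sub>M (PiM I M \<Otimes>\<^sub>M E) \<Otimes>\<^sub>M PiM I M"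
proof (intro measurable_Pair measurable_restrict)
  fix i assume "i \<in> I"
  then show "(\<lambda>s. fst s i) \<in> PiM I M \<Otimes>\<^sub>M E \<rightarrow>\<^sub>M M i"
    by (intro measurable_compose[OF measurable_fst measurable_component_singleton])
qed simp

lemma joint_target0_marginal_coordinates:
  "distr (joint_target0 (PiM I M \<Otimes>\<^sub>M E) I M ctx p (\<lambda>i s. fst s i))
         (PiM I M \<Otimes>\<^sub>M E) (\<lambda>(s, x). (x, snd s))
   = density (PiM I M \<Otimes>\<^sub>M E) (\<lambda>s. ennreal (ctx s * (\<Prod>i\<in>I. p i (fst s i))))"
  unfolding joint_target0_def
proof (rule distr_distr_left_inverse)
  show "(\<lambda>(s, x). (x, snd s)) \<in> (PiM I M \<Otimes>\<^sub>M E) \<Otimes>\<^sub>M PiM I M \<rightarrow>\<^sub>M PiM I M \<Otimes>\<^sub>M E"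
    by measurable
next
  fix s assume "s \<in> space (density (PiM I M \<Otimes>\<^sub>M E) (\<lambda>s. ennreal (ctx s * (\<Prod>i\<in>I. p i (fst s i)))))"
  then have "fst s \<in> extensional I"
    by (auto simp: space_pair_measure space_PiM PiE_def)
  then show "(\<lambda>(s, x). (x, snd s)) (s, \<lambda>i\<in>I. fst s i) = s"
    by (simp add: extensional_restrict)
qed (simp_all add: measurable_pair_restrict_fst)

lemma boltzmann_factor_product:
  assumes "\<And>i. i \<in> I \<Longrightarrow> p i (f i) = c i * exp (- \<beta> * U i (f i))"
  shows "q * exp (- \<beta> * (Uenv e + Uint f e)) * (\<Prod>i\<in>I. p i (f i))
         = (q * prod c I) * exp (- \<beta> * V_tot I U Uenv Uint f e)"
proof (cases "finite I")
  case True
  have "(\<Prod>i\<in>I. p i (f i)) = prod c I * exp (- \<beta> * (\<Sum>i\<in>I. U i (f i)))"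
    by (simp add: assms prod.distrib exp_sum True sum_distrib_left)
  then show ?thesis
    by (simp add: V_tot_def exp_add[symmetric] algebra_simps)
next
  case False
  then show ?thesis by (simp add: V_tot_def algebra_simps)
qed

theorem proposition1:
  fixes I :: "'i set" and M :: "'i \<Rightarrow> 'a measure" and E :: "'e measure"
    and \<beta> :: real
    and U :: "'i \<Rightarrow> 'a \<Rightarrow> real" and Uenv :: "'e \<Rightarrow> real"
    and Uint :: "('i \<Rightarrow> 'a) \<Rightarrow> 'e \<Rightarrow> real"
    and p :: "'i \<Rightarrow> 'a \<Rightarrow> real" and pctx :: "('i \<Rightarrow> 'a) \<times> 'e \<Rightarrow> real"
  assumes "finite I"
    and "\<beta> > 0"
    and "\<And>i. i \<in> I \<Longrightarrow> U i \<in> borel_measurable (M i)"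
    and "Uenv \<in> borel_measurable E"
    and "(\<lambda>(f, e). Uint f e) \<in> borel_measurable (PiM I M \<Otimes>\<^sub>M E)"
    and "\<And>i. i \<in> I \<Longrightarrow> \<exists>c>0. \<forall>x\<in>space (M i). p i x = c * exp (- \<beta> * U i x)"
    and "\<exists>c>0. \<forall>s\<in>space (PiM I M \<Otimes>\<^sub>M E).
           pctx s = c * exp (- \<beta> * (Uenv (snd s) + Uint (fst s) (snd s)))"
  shows "\<exists>c>0.
    distr (joint_target0 (PiM I M \<Otimes>\<^sub>M E) I M pctx p (\<lambda>i s. fst s i))
          (PiM I M \<Otimes>\<^sub>M E) (\<lambda>(s, x). (x, snd s))
    = density (PiM I M \<Otimes>\<^sub>M E)
        (\<lambda>(x, e). ennreal (c * exp (- \<beta> * V_tot I U Uenv Uint x e)))"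
proof -
  obtain q where q: "q > 0" "\<forall>s\<in>space (PiM I M \<Otimes>\<^sub>M E).
      pctx s = q * exp (- \<beta> * (Uenv (snd s) + Uint (fst s) (snd s)))"
    using assms(7) by blast
  obtain c where c: "\<And>i. i \<in> I \<Longrightarrow> c i > 0 \<and> (\<forall>x\<in>space (M i). p i x = c i * exp (- \<beta> * U i x))"
    using assms(6) by metis
  have "pctx s * (\<Prod>i\<in>I. p i (fst s i)) = (q * prod c I) * exp (- \<beta> * V_tot I U Uenv Uint (fst s) (snd s))"
    if "s \<in> space (PiM I M \<Otimes>\<^sub>M E)" for s
  proof -
    have "fst s i \<in> space (M i)" if "i \<in> I" for i
      using \<open>s \<in> _\<close> that by (auto simp: space_pair_measure space_PiM)
    then have "p i (fst s i) = c i * exp (- \<beta> * U i (fst s i))" if "i \<in> I" for i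
      using c that by blast
    from boltzmann_factor_product[where f="fst s" and e="snd s" and p=p and c=c and U=U, OF this]
    show ?thesis
      using q(2) that by simp
  qed
  then have "distr (joint_target0 (PiM I M \<Otimes>\<^sub>M E) I M pctx p (\<lambda>i s. fst s i))
          (PiM I M \<Otimes>\<^sub>M E) (\<lambda>(s, x). (x, snd s))
      = density (PiM I M \<Otimes>\<^sub>M E) (\<lambda>(x, e). ennreal ((q * prod c I) * exp (- \<beta> * V_tot I U Uenv Uint x e)))"
    unfolding joint_target0_marginal_coordinates by (auto intro: density_cong_space)
  moreover have "q * prod c I > 0"
    using q(1) c by (simp add: prod_pos)
  ultimately show ?thesis by blast
qed

end
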